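(* Let $n>1$ be an integer, let $m=\prod_{p\mid n,\ p \text{ prime}} p$ be the square-free part (radical) of $n$, and let $0<a_1<a_2<\cdots<a_{\phi(n)}<n$ be the positive integers less than $n$ and coprime with $n$, listed in increasing order. Then $$\sum_{j=1}^{\phi(n)} j\,a_j=\frac{\phi(n)}{24}\left(8n\phi(n)+6n+2\phi(m)(-1)^{\omega(m)}-2^{\omega(m)}\right).$$
   Context: $\phi$ denotes Euler's totient function and $\omega(k)$ denotes the number of distinct prime factors of $k$. *)

theory Defs
  imports "HOL-Number_Theory.Number_Theory"
begin

definition radical :: "nat \<Rightarrow> nat" where
  "radical n = (\<Prod>p\<in>prime_factors n. p)"

definition omega :: "nat \<Rightarrow> nat" where
  "omega k = card (prime_factors k)"

definition totatives_sorted :: "nat \<Rightarrow> nat list" where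
  "totatives_sorted n = sorted_list_of_set {a. 0 < a \<and> a < n \<and> coprime a n}"

end

theory Submission
  imports Defs
begin

(* Let L(c) count the b in {1..c} coprime to n, so that L(a_j) = j. Summation by parts with
   F = L^2 + L, which jumps by 2 L(c) exactly at the totatives c, gives
   sum_j j a_j = (n F(n) - sum_{c<n} F(c)) / 2.  Inclusion-exclusion over the prime factors of n
   writes L(c) as a signed sum of floor(c/d) over the squarefree divisors d of n, so the first two
   moments of L reduce to the sums sum_{c<n} floor(c/d) floor(c/e) for d, e dividing n; these are
   evaluated through c mod d and c mod e, the Chinese remainder theorem contributing gcd(d,e)^2.
   Summed over pairs of sets of primes, every term factors into an Euler product, which yields
   phi(n), phi(m) (-1)^omega(m) and 2^omega(m). *)

lemma sum_Pow_insert: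
  assumes "finite F" "x \<notin> F"
  shows "(\<Sum>S\<in>Pow (insert x F). h S) = (\<Sum>S\<in>Pow F. h S) + (\<Sum>S\<in>Pow F. h (insert x S))"
proof -
  have "Pow F \<inter> insert x ` Pow F = {}" "inj_on (insert x) (Pow F)"
    using assms by (auto simp: inj_on_def)
  then show ?thesis
    unfolding Pow_insert using assms by (simp add: sum.union_disjoint sum.reindex)
qed

lemma sum_Pow_signed_prod:
  fixes g :: "'a \<Rightarrow> 'b::comm_ring_1"
  assumes "finite P"
  shows "(\<Sum>S\<in>Pow P. (-1) ^ card S * (\<Prod>p\<in>S. g p)) = (\<Prod>p\<in>P. 1 - g p)"
  using prod_add[OF assms, of "\<lambda>p. - g p" "\<lambda>_. 1"] by (simp add: prod_uminus add.commute)

lemma sum_Pow_Pow_prod_inter: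
  fixes a b c :: "'a \<Rightarrow> 'b::comm_semiring_1"
  assumes "finite P"
  shows "(\<Sum>S\<in>Pow P. \<Sum>T\<in>Pow P. (\<Prod>p\<in>S. a p) * (\<Prod>p\<in>T. b p) * (\<Prod>p\<in>S \<inter> T. c p))
       = (\<Prod>p\<in>P. 1 + a p + b p + a p * b p * c p)"
  using assms
proof (induction P rule: finite_induct)
  case empty
  then show ?case by simp
next
  case (insert x F)
  define t where "t S T = (\<Prod>p\<in>S. a p) * (\<Prod>p\<in>T. b p) * (\<Prod>p\<in>S \<inter> T. c p)" for S T
  have sub: "finite S" "x \<notin> S" if "S \<in> Pow F" for S
    using that insert.hyps finite_subset by auto
  have insert_eqs: "t (insert x S) T = a x * t S T" "t S (insert x T) = b x * t S T"
       "t (insert x S) (insert x T) = a x * b x * c x * t S T"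
    if "S \<in> Pow F" "T \<in> Pow F" for S T
  proof -
    have "insert x S \<inter> T = S \<inter> T" "S \<inter> insert x T = S \<inter> T"
         "insert x S \<inter> insert x T = insert x (S \<inter> T)"
      using sub that by auto
    then show "t (insert x S) T = a x * t S T" "t S (insert x T) = b x * t S T"
              "t (insert x S) (insert x T) = a x * b x * c x * t S T"
      unfolding t_def using sub[OF that(1)] sub[OF that(2)] by (simp_all add: ac_simps)
  qed
  have "(\<Sum>S\<in>Pow (insert x F). \<Sum>T\<in>Pow (insert x F). t S T)
      = (\<Sum>S\<in>Pow F. \<Sum>T\<in>Pow F. t S T + t S (insert x T) + t (insert x S) T + t (insert x S) (insert x T))"
    using insert.hyps by (simp add: sum_Pow_insert sum.distrib add_ac)
  also have "\<dots> = (\<Sum>S\<in>Pow F. \<Sum>T\<in>Pow F. (1 + a x + b x + a x * b x * c x) * t S T)"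
    by (intro sum.cong refl) (simp add: insert_eqs algebra_simps)
  also have "\<dots> = (1 + a x + b x + a x * b x * c x) * (\<Sum>S\<in>Pow F. \<Sum>T\<in>Pow F. t S T)"
    by (simp add: sum_distrib_left)
  finally show ?case
    using insert unfolding t_def by simp
qed

lemma sum_lessThan_of_nat:
  "(\<Sum>i<k. of_nat i :: 'a::field_char_0) = of_nat k * (of_nat k - 1) / 2"
  by (induction k) (auto simp: field_simps)

lemma sum_lessThan_of_nat_squared:
  "(\<Sum>i<k. of_nat i ^ 2 :: 'a::field_char_0) = of_nat k * (of_nat k - 1) * (2 * of_nat k - 1) / 6"
  by (induction k) (auto simp: field_simps power2_eq_square)

lemma sum_lessThan_mult_eq_sum_blocks:
  fixes d K :: nat and f :: "nat \<Rightarrow> 'a::comm_monoid_add"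
  shows "(\<Sum>c<d * K. f c) = (\<Sum>t<K. \<Sum>r<d. f (d * t + r))"
proof (induction K)
  case (Suc K)
  have "(\<Sum>c<d * Suc K. f c) = (\<Sum>c<d * K. f c) + (\<Sum>c\<in>{d * K..<d * K + d}. f c)"
    by (simp add: lessThan_atLeast0 sum.atLeastLessThan_concat add.commute)
  also have "(\<Sum>c\<in>{d * K..<d * K + d}. f c) = (\<Sum>r<d. f (d * K + r))"
    using sum.shift_bounds_nat_ivl[of f 0 "d * K" d] by (simp add: lessThan_atLeast0 add.commute)
  finally show ?case
    using Suc by simp
qed simp

lemma sum_div_eq:
  assumes "d > 0" "d dvd n"
  shows "(\<Sum>c<n. real (c div d)) = (real n ^ 2 / real d - real n) / 2"
proof -
  obtain K where n: "n = d * K"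
    using assms by (auto elim: dvdE)
  have "(\<Sum>c<n. real (c div d)) = (\<Sum>t<K. \<Sum>r<d. real ((d * t + r) div d))"
    unfolding n by (rule sum_lessThan_mult_eq_sum_blocks)
  also have "\<dots> = real d * (\<Sum>t<K. real t)"
    using assms by (simp add: sum_distrib_left)
  finally show ?thesis
    unfolding n sum_lessThan_of_nat using assms by (simp add: field_simps power2_eq_square)
qed

lemma sum_times_mod_eq:
  assumes "d > 0" "d dvd n"
  shows "(\<Sum>c<n. real c * real (c mod d)) = real n * (real d - 1) * (3 * real n + real d - 2) / 12"
proof -
  obtain K where n: "n = d * K"
    using assms by (auto elim: dvdE)
  have "(\<Sum>c<n. real c * real (c mod d))
      = (\<Sum>t<K. \<Sum>r<d. real (d * t + r) * real ((d * t + r) mod d))"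
    unfolding n by (rule sum_lessThan_mult_eq_sum_blocks)
  also have "\<dots> = (\<Sum>t<K. real d * real t * (\<Sum>r<d. real r) + (\<Sum>r<d. real r ^ 2))"
    using assms
    by (intro sum.cong refl) (simp add: sum_distrib_left sum.distrib algebra_simps power2_eq_square)
  also have "\<dots> = real d * (\<Sum>t<K. real t) * (\<Sum>r<d. real r) + real K * (\<Sum>r<d. real r ^ 2)"
    by (simp add: sum.distrib) (simp add: sum_distrib_left sum_distrib_right mult_ac)
  finally show ?thesis
    unfolding n sum_lessThan_of_nat sum_lessThan_of_nat_squared
    by (simp add: field_simps power2_eq_square)
qed

lemma mod_eq_divisor_decomp:
  fixes c d g :: nat
  assumes "g dvd d"
  shows "c mod d = g * (c mod d div g) + c mod g"
  using assms by (metis div_mult_mod_eq mod_mod_cancel mult.commute)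

lemma lcm_eq_gcd_mult_div_gcd:
  fixes d e :: nat
  shows "lcm d e = gcd d e * (d div gcd d e) * (e div gcd d e)"
  by (metis dvd_div_mult_self gcd_dvd1 gcd_dvd2 lcm_nat_def mult.commute div_mult_swap)

text \<open>Chinese remainder theorem: residues modulo \<open>d\<close> and \<open>e\<close> agree modulo \<open>gcd d e\<close>
  and are otherwise independent.\<close>
lemma bij_betw_mod_gcd_box:
  fixes d e :: nat
  assumes "d > 0" "e > 0"
  defines "g \<equiv> gcd d e"
  shows "bij_betw (\<lambda>c. (c mod g, c mod d div g, c mod e div g))
           {..<lcm d e} ({..<g} \<times> {..<d div g} \<times> {..<e div g})"
    (is "bij_betw ?h _ ?B")
proof -
  have "g > 0" "g dvd d" "g dvd e"
    using assms(1) unfolding g_def by simp_all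
  have inj: "inj_on ?h {..<lcm d e}"
  proof (rule inj_onI)
    fix x y
    assume "x \<in> {..<lcm d e}" "y \<in> {..<lcm d e}" "?h x = ?h y"
    then have "x mod d = y mod d" "x mod e = y mod e"
      by (metis \<open>g dvd d\<close> \<open>g dvd e\<close> mod_eq_divisor_decomp prod.inject)+
    then have "[x = y] (mod lcm d e)"
      by (intro cong_cong_lcm_nat) (auto simp: cong_def)
    then show "x = y"
      using \<open>x \<in> _\<close> \<open>y \<in> _\<close> cong_less_modulus_unique_nat by auto
  qed
  have "?h ` {..<lcm d e} \<subseteq> ?B"
    using \<open>g > 0\<close> \<open>g dvd d\<close> \<open>g dvd e\<close> assms(1,2)
    by (auto simp: div_less_iff_less_mult dvd_div_mult_self)
  moreover have "card (?h ` {..<lcm d e}) = card ?B"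
    using inj lcm_eq_gcd_mult_div_gcd[of d e] unfolding g_def[symmetric]
    by (simp add: card_image card_cartesian_product)
  ultimately show ?thesis
    using inj by (simp add: bij_betw_def card_subset_eq)
qed

lemma sum_mod_times_mod_lcm:
  fixes d e :: nat
  assumes "d > 0" "e > 0"
  defines "g \<equiv> gcd d e"
  shows "(\<Sum>c<lcm d e. real (c mod d) * real (c mod e)) =
    real (lcm d e) * (real d * real e / 4 - (real d + real e) / 4 + real g ^ 2 / 12 + 1 / 6)"
proof -
  define d' e' where "d' = d div g" and "e' = e div g"
  have "g dvd d" "g dvd e"
    unfolding g_def by simp_all
  then have d': "d = g * d'" and e': "e = g * e'"
    unfolding d'_def e'_def by simp_all
  have L: "lcm d e = g * d' * e'"
    unfolding g_def d'_def e'_def by (rule lcm_eq_gcd_mult_div_gcd)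
  define F where "F = (\<lambda>(u, i, j). (real g * real i + real u) * (real g * real j + real u))"
  have "real (c mod d) = real g * real (c mod d div g) + real (c mod g)"
       "real (c mod e) = real g * real (c mod e div g) + real (c mod g)" for c
    using mod_eq_divisor_decomp[OF \<open>g dvd d\<close>] mod_eq_divisor_decomp[OF \<open>g dvd e\<close>]
    by (metis of_nat_add of_nat_mult)+
  then have "(\<Sum>c<lcm d e. real (c mod d) * real (c mod e))
      = (\<Sum>c<lcm d e. F (c mod g, c mod d div g, c mod e div g))"
    unfolding F_def by simp
  also have "\<dots> = sum F ({..<g} \<times> {..<d'} \<times> {..<e'})"
    using sum.reindex_bij_betw[OF bij_betw_mod_gcd_box[OF assms(1,2)]]
    unfolding g_def[symmetric] d'_def e'_def .
  also have "\<dots> = (\<Sum>u<g. (\<Sum>i<d'. real g * real i + real u) * (\<Sum>j<e'. real g * real j + real u))"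
    unfolding F_def by (simp add: sum.cartesian_product sum_product)
  also have "\<dots> = (\<Sum>u<g. (real g * (real d' * (real d' - 1) / 2) + real d' * real u)
                         * (real g * (real e' * (real e' - 1) / 2) + real e' * real u))"
    by (simp add: sum.distrib sum_distrib_left[symmetric] sum_lessThan_of_nat)
  also have "\<dots> = (\<Sum>u<g. real g * (real d' * (real d' - 1) / 2) * (real g * (real e' * (real e' - 1) / 2))
       + (real g * (real d' * (real d' - 1) / 2) * real e' + real g * (real e' * (real e' - 1) / 2) * real d')
         * real u
       + real d' * real e' * real u ^ 2)"
    by (intro sum.cong refl) (simp add: algebra_simps power2_eq_square)
  also have "\<dots> = real g * (real g * (real d' * (real d' - 1) / 2) * (real g * (real e' * (real e' - 1) / 2)))
       + (real g * (real d' * (real d' - 1) / 2) * real e' + real g * (real e' * (real e' - 1) / 2) * real d')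
         * (\<Sum>u<g. real u)
       + real d' * real e' * (\<Sum>u<g. real u ^ 2)"
    by (simp add: sum.distrib sum_distrib_left)
  also have "\<dots> = real (lcm d e) * (real d * real e / 4 - (real d + real e) / 4 + real g ^ 2 / 12 + 1 / 6)"
    unfolding sum_lessThan_of_nat sum_lessThan_of_nat_squared L of_nat_mult
    by (simp add: d' e' field_simps power2_eq_square)
  finally show ?thesis .
qed

lemma sum_mod_times_mod:
  fixes d e :: nat
  assumes "d > 0" "e > 0" "d dvd n" "e dvd n"
  shows "(\<Sum>c<n. real (c mod d) * real (c mod e)) =
    real n * (real d * real e / 4 - (real d + real e) / 4 + real (gcd d e) ^ 2 / 12 + 1 / 6)"
proof -
  define L where "L = lcm d e"
  obtain K where n: "n = L * K"
    using assms unfolding L_def by (meson dvdE lcm_least)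
  have dL: "d dvd L" "e dvd L"
    unfolding L_def by auto
  have "(\<Sum>c<n. real (c mod d) * real (c mod e))
      = (\<Sum>t<K. \<Sum>r<L. real ((L * t + r) mod d) * real ((L * t + r) mod e))"
    unfolding n by (rule sum_lessThan_mult_eq_sum_blocks)
  also have "\<dots> = real K * (\<Sum>r<L. real (r mod d) * real (r mod e))"
    using dL by (simp add: mod_add_left_eq[symmetric] del: mod_add_left_eq)
  finally show ?thesis
    unfolding sum_mod_times_mod_lcm[OF assms(1,2), folded L_def] n by simp
qed

lemma sum_div_times_div:
  fixes d e :: nat
  assumes "d > 0" "e > 0" "d dvd n" "e dvd n"
  shows "(\<Sum>c<n. real (c div d) * real (c div e)) =
    real n * (4 * real n ^ 2 - 3 * real n * (real d + real e) - real d ^ 2 - real e ^ 2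
              + 3 * real d * real e + real (gcd d e) ^ 2) / (12 * real d * real e)"
proof -
  have div_eq: "real (c div k) = (real c - real (c mod k)) / real k" if "k > 0" for c k :: nat
  proof -
    have "real c = real k * real (c div k) + real (c mod k)"
      by (metis div_mult_mod_eq of_nat_add of_nat_mult mult.commute)
    then show ?thesis
      using that by (simp add: field_simps)
  qed
  have "(\<Sum>c<n. real (c div d) * real (c div e))
      = ((\<Sum>c<n. real c ^ 2) - (\<Sum>c<n. real c * real (c mod d)) - (\<Sum>c<n. real c * real (c mod e))
         + (\<Sum>c<n. real (c mod d) * real (c mod e))) / (real d * real e)"
    using assms
    by (simp add: div_eq sum_divide_distrib[symmetric] sum.distrib sum_subtractf
                  field_simps power2_eq_square)
  then show ?thesis
    unfolding sum_lessThan_of_nat_squared sum_times_mod_eq[OF assms(1,3)] sum_times_mod_eq[OF assms(2,4)]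
      sum_mod_times_mod[OF assms]
    using assms by (simp add: field_simps power2_eq_square)
qed

definition coprime_count :: "nat \<Rightarrow> nat \<Rightarrow> nat" where
  "coprime_count n c = card {b \<in> {1..c}. coprime b n}"

lemma multiples_not_dvd_primes_eq_image:
  fixes p :: nat and F :: "nat set"
  assumes "prime p" "\<forall>q\<in>F. prime q" "p \<notin> F"
  shows "{b \<in> {1..c}. (\<forall>q\<in>F. \<not> q dvd b) \<and> p dvd b} = (*) p ` {b \<in> {1..c div p}. \<forall>q\<in>F. \<not> q dvd b}"
proof -
  have "p > 0"
    using assms(1) by (simp add: prime_gt_0_nat)
  have F_dvd: "q dvd p * b \<longleftrightarrow> q dvd b" if "q \<in> F" for q b
    using that assms by (metis dvd_mult prime_dvd_mult_iff primes_dvd_imp_eq)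
  show ?thesis
  proof (intro equalityI subsetI)
    fix y
    assume "y \<in> {b \<in> {1..c}. (\<forall>q\<in>F. \<not> q dvd b) \<and> p dvd b}"
    moreover from this obtain b where "y = p * b"
      by auto
    ultimately show "y \<in> (*) p ` {b \<in> {1..c div p}. \<forall>q\<in>F. \<not> q dvd b}"
      using \<open>p > 0\<close> F_dvd by (auto simp: less_eq_div_iff_mult_less_eq mult.commute)
  next
    fix y
    assume "y \<in> (*) p ` {b \<in> {1..c div p}. \<forall>q\<in>F. \<not> q dvd b}"
    then show "y \<in> {b \<in> {1..c}. (\<forall>q\<in>F. \<not> q dvd b) \<and> p dvd b}"
      using \<open>p > 0\<close> F_dvd by (auto simp: less_eq_div_iff_mult_less_eq mult.commute)
  qed
qed

lemma card_not_dvd_primes: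
  fixes A :: "nat set"
  assumes "finite A" "\<forall>p\<in>A. prime p"
  shows "real (card {b \<in> {1..c}. \<forall>p\<in>A. \<not> p dvd b}) = (\<Sum>S\<in>Pow A. (-1) ^ card S * real (c div \<Prod>S))"
  using assms
proof (induction A arbitrary: c rule: finite_induct)
  case empty
  have "{b \<in> {1..c}. \<forall>p\<in>{}. \<not> p dvd b} = {1..c}"
    by auto
  then show ?case
    by simp
next
  case (insert p F)
  have "prime p" "\<forall>q\<in>F. prime q"
    using insert.prems by auto
  define X where "X c = {b \<in> {1..c}. \<forall>q\<in>F. \<not> q dvd b}" for c
  have "{b \<in> X c. p dvd b} = (*) p ` X (c div p)"
    using multiples_not_dvd_primes_eq_image[OF \<open>prime p\<close> \<open>\<forall>q\<in>F. prime q\<close> insert.hyps(2)]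
    unfolding X_def by simp
  then have "card {b \<in> X c. p dvd b} = card (X (c div p))"
    using \<open>prime p\<close> by (simp add: card_image inj_on_mult prime_gt_0_nat)
  moreover have "card (X c - {b \<in> X c. p dvd b}) = card (X c) - card {b \<in> X c. p dvd b}"
    "card {b \<in> X c. p dvd b} \<le> card (X c)"
    unfolding X_def by (auto intro: card_Diff_subset card_mono)
  moreover have "{b \<in> {1..c}. \<forall>q\<in>insert p F. \<not> q dvd b} = X c - {b \<in> X c. p dvd b}"
    unfolding X_def by auto
  ultimately have "real (card {b \<in> {1..c}. \<forall>q\<in>insert p F. \<not> q dvd b})
      = real (card (X c)) - real (card (X (c div p)))"
    by (simp add: of_nat_diff)
  also have "\<dots> = (\<Sum>S\<in>Pow F. (-1) ^ card S * real (c div \<Prod>S))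
                  + (\<Sum>S\<in>Pow F. (-1) ^ card (insert p S) * real (c div \<Prod>(insert p S)))"
  proof -
    have "(-1) ^ card (insert p S) * real (c div \<Prod>(insert p S))
        = - ((-1) ^ card S * real (c div p div \<Prod>S))" if "S \<in> Pow F" for S
    proof -
      have "finite S" "p \<notin> S"
        using that insert.hyps finite_subset by auto
      then show ?thesis
        by (simp add: div_mult2_eq)
    qed
    then show ?thesis
      unfolding X_def insert.IH[OF \<open>\<forall>q\<in>F. prime q\<close>] by (simp add: sum_negf)
  qed
  finally show ?case
    using insert.hyps by (simp add: sum_Pow_insert)
qed

lemma coprime_iff_prime_factors_not_dvd:
  fixes b n :: nat
  assumes "n > 0"
  shows "coprime b n \<longleftrightarrow> (\<forall>p\<in>prime_factors n. \<not> p dvd b)"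
proof
  show "\<forall>p\<in>prime_factors n. \<not> p dvd b" if "coprime b n"
    using that by (auto simp: in_prime_factors_iff dest: coprime_common_divisor)
  show "coprime b n" if "\<forall>p\<in>prime_factors n. \<not> p dvd b"
  proof (rule ccontr)
    assume "\<not> coprime b n"
    then obtain p where "prime p" "p dvd gcd b n"
      by (metis coprime_iff_gcd_eq_1 prime_factor_nat)
    then show False
      using that assms by (auto simp: in_prime_factors_iff dvd_trans)
  qed
qed

lemma coprime_count_eq_sum_Pow:
  assumes "n > 0"
  shows "real (coprime_count n c) = (\<Sum>S\<in>Pow (prime_factors n). (-1) ^ card S * real (c div \<Prod>S))"
  unfolding coprime_count_def coprime_iff_prime_factors_not_dvd[OF assms]
  by (rule card_not_dvd_primes) auto

lemma prod_subset_prime_factors: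
  fixes n :: nat
  assumes "S \<subseteq> prime_factors n"
  shows "\<Prod>S dvd n" "\<Prod>S > 0"
proof -
  show "\<Prod>S > 0"
    using assms by (auto intro!: prod_pos dest: in_prime_factors_imp_prime prime_gt_0_nat)
  show "\<Prod>S dvd n"
  proof (cases "n = 0")
    case False
    have "\<Prod>S dvd \<Prod>(prime_factors n)"
      using assms by (intro prod_dvd_prod_subset) auto
    also have "\<dots> dvd (\<Prod>p\<in>prime_factors n. p ^ multiplicity p n)"
      by (intro prod_dvd_prod) (simp add: prime_factors_multiplicity)
    also have "\<dots> = n"
      using False prime_factorization_nat by simp
    finally show ?thesis .
  qed simp
qed

lemma gcd_prod_primes:
  fixes S T :: "nat set"
  assumes "finite S" "finite T" "\<forall>p\<in>S \<union> T. prime p"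
  shows "gcd (\<Prod>S) (\<Prod>T) = \<Prod>(S \<inter> T)"
proof -
  have "\<Prod>S = \<Prod>(S \<inter> T) * \<Prod>(S - T)" "\<Prod>T = \<Prod>(S \<inter> T) * \<Prod>(T - S)"
    using prod.subset_diff[of "S \<inter> T" S id] prod.subset_diff[of "S \<inter> T" T id] assms(1,2)
    by (simp_all add: Diff_Int2 Int_commute mult.commute Diff_Int_distrib2 Diff_Int)
  moreover have "coprime (\<Prod>(S - T)) (\<Prod>(T - S))"
    using assms(3) by (intro prod_coprime_left prod_coprime_right) (metis DiffE UnI1 UnI2 primes_coprime)
  ultimately show ?thesis
    by (simp add: gcd_mult_distrib_nat[symmetric])
qed

lemma prime_factors_radical: "prime_factors (radical n) = prime_factors n"
proof -
  have "prime_factors (radical n) = \<Union>((prime_factors \<circ> (\<lambda>p. p)) ` prime_factors n)"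
    unfolding radical_def
    by (intro prime_factors_prod) (auto dest: in_prime_factors_imp_prime simp: prime_gt_0_nat)
  moreover have "prime_factors p = {p}" if "p \<in> prime_factors n" for p
    using that by (simp add: prime_prime_factors in_prime_factors_imp_prime)
  ultimately show ?thesis
    by auto
qed

lemma totient_radical_signed:
  "real (totient (radical n)) * (-1) ^ omega (radical n) = (\<Prod>p\<in>prime_factors n. 1 - real p)"
proof -
  have "real (totient (radical n)) = (\<Prod>p\<in>prime_factors n. real p) * (\<Prod>p\<in>prime_factors n. 1 - 1 / real p)"
    using totient_formula2[of "radical n", unfolded prime_factors_radical] by (simp add: radical_def)
  then have "real (totient (radical n)) * (-1) ^ omega (radical n)
      = (\<Prod>p\<in>prime_factors n. real p * (1 - 1 / real p) * -1)"
    unfolding omega_def prime_factors_radical by (simp only: prod.distrib prod_constant)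
  also have "\<dots> = (\<Prod>p\<in>prime_factors n. 1 - real p)"
    by (intro prod.cong refl) (auto dest!: in_prime_factors_imp_prime prime_gt_0_nat simp: field_simps)
  finally show ?thesis .
qed

lemma prod_neg_inverse_of_nat: "(\<Prod>p\<in>S. - 1 / real p) = (-1) ^ card S / real (\<Prod>S)"
  by (simp add: prod_uminus prod_dividef)

lemma sum_Pow_Pow_signed_gcd_squared:
  fixes P :: "nat set"
  assumes "finite P" "\<forall>p\<in>P. prime p"
  shows "(\<Sum>S\<in>Pow P. \<Sum>T\<in>Pow P. (-1) ^ card S / real (\<Prod>S) * ((-1) ^ card T / real (\<Prod>T))
                                   * real (gcd (\<Prod>S) (\<Prod>T)) ^ 2)
       = 2 ^ card P * (\<Prod>p\<in>P. 1 - 1 / real p)"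
proof -
  have "(\<Sum>S\<in>Pow P. \<Sum>T\<in>Pow P. (-1) ^ card S / real (\<Prod>S) * ((-1) ^ card T / real (\<Prod>T))
                                   * real (gcd (\<Prod>S) (\<Prod>T)) ^ 2)
      = (\<Sum>S\<in>Pow P. \<Sum>T\<in>Pow P. (\<Prod>p\<in>S. - 1 / real p) * (\<Prod>p\<in>T. - 1 / real p)
                                   * (\<Prod>p\<in>S \<inter> T. real p ^ 2))"
  proof (intro sum.cong refl)
    fix S T
    assume "S \<in> Pow P" "T \<in> Pow P"
    then have "gcd (\<Prod>S) (\<Prod>T) = \<Prod>(S \<inter> T)"
      using assms by (intro gcd_prod_primes) (auto intro: finite_subset)
    then show "(-1) ^ card S / real (\<Prod>S) * ((-1) ^ card T / real (\<Prod>T)) * real (gcd (\<Prod>S) (\<Prod>T)) ^ 2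
        = (\<Prod>p\<in>S. - 1 / real p) * (\<Prod>p\<in>T. - 1 / real p) * (\<Prod>p\<in>S \<inter> T. real p ^ 2)"
      by (simp only: prod_neg_inverse_of_nat of_nat_prod prod_power_distrib)
  qed
  also have "\<dots> = (\<Prod>p\<in>P. 1 + - 1 / real p + - 1 / real p + - 1 / real p * (- 1 / real p) * real p ^ 2)"
    by (rule sum_Pow_Pow_prod_inter[OF assms(1)])
  also have "\<dots> = (\<Prod>p\<in>P. 2 * (1 - 1 / real p))"
    using assms(2) by (intro prod.cong refl) (auto dest!: prime_gt_0_nat simp: field_simps power2_eq_square)
  also have "\<dots> = 2 ^ card P * (\<Prod>p\<in>P. 1 - 1 / real p)"
    by (simp only: prod.distrib prod_constant)
  finally show ?thesis .
qed

lemma sum_Pow_prime_factors_signed: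
  fixes n :: nat
  assumes "n > 1"
  shows "(\<Sum>S\<in>Pow (prime_factors n). (-1) ^ card S) = (0 :: real)"
    and "(\<Sum>S\<in>Pow (prime_factors n). (-1) ^ card S / real (\<Prod>S)) = real (totient n) / real n"
    and "(\<Sum>S\<in>Pow (prime_factors n). (-1) ^ card S * real (\<Prod>S)) = (\<Prod>p\<in>prime_factors n. 1 - real p)"
    and "(\<Sum>S\<in>Pow (prime_factors n). \<Sum>T\<in>Pow (prime_factors n).
            (-1) ^ card S / real (\<Prod>S) * ((-1) ^ card T / real (\<Prod>T)) * real (gcd (\<Prod>S) (\<Prod>T)) ^ 2)
         = 2 ^ card (prime_factors n) * (real (totient n) / real n)"
proof -
  have fin: "finite (prime_factors n)" and ne: "prime_factors n \<noteq> {}"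
    and primes: "\<forall>p\<in>prime_factors n. prime p"
    using assms by (auto simp: prime_factorization_empty_iff)
  have phi: "real (totient n) / real n = (\<Prod>p\<in>prime_factors n. 1 - 1 / real p)"
    using assms totient_formula2[of n] by simp
  show "(\<Sum>S\<in>Pow (prime_factors n). (-1) ^ card S) = (0 :: real)"
    using sum_Pow_signed_prod[OF fin, of "\<lambda>_. 1 :: real"] fin ne by (simp add: power_0_left)
  show "(\<Sum>S\<in>Pow (prime_factors n). (-1) ^ card S / real (\<Prod>S)) = real (totient n) / real n"
    using sum_Pow_signed_prod[OF fin, of "\<lambda>p. 1 / real p"] unfolding phi by (simp add: prod_dividef)
  show "(\<Sum>S\<in>Pow (prime_factors n). (-1) ^ card S * real (\<Prod>S)) = (\<Prod>p\<in>prime_factors n. 1 - real p)"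
    using sum_Pow_signed_prod[OF fin, of real] by simp
  show "(\<Sum>S\<in>Pow (prime_factors n). \<Sum>T\<in>Pow (prime_factors n).
            (-1) ^ card S / real (\<Prod>S) * ((-1) ^ card T / real (\<Prod>T)) * real (gcd (\<Prod>S) (\<Prod>T)) ^ 2)
         = 2 ^ card (prime_factors n) * (real (totient n) / real n)"
    using sum_Pow_Pow_signed_gcd_squared[OF fin primes] unfolding phi .
qed

lemma sum_coprime_count:
  assumes "n > 1"
  shows "(\<Sum>c<n. real (coprime_count n c)) = real n * real (totient n) / 2"
proof -
  define P where "P = prime_factors n"
  have "(\<Sum>c<n. real (coprime_count n c)) = (\<Sum>S\<in>Pow P. (-1) ^ card S * (\<Sum>c<n. real (c div \<Prod>S)))"
    using assms unfolding P_def
    by (simp add: coprime_count_eq_sum_Pow sum_distrib_left sum.swap[of _ "{..<n}"])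
  also have "\<dots> = (\<Sum>S\<in>Pow P. real n ^ 2 / 2 * ((-1) ^ card S / real (\<Prod>S)) - real n / 2 * (-1) ^ card S)"
    using prod_subset_prime_factors unfolding P_def
    by (intro sum.cong refl) (simp add: sum_div_eq field_simps del: of_nat_prod)
  also have "\<dots> = real n ^ 2 / 2 * (\<Sum>S\<in>Pow P. (-1) ^ card S / real (\<Prod>S))
                  - real n / 2 * (\<Sum>S\<in>Pow P. (-1) ^ card S)"
    by (simp only: sum_subtractf sum_distrib_left)
  finally show ?thesis
    using assms unfolding P_def sum_Pow_prime_factors_signed[OF assms] by (simp add: power2_eq_square)
qed

lemma sum_coprime_count_squared:
  assumes "n > 1"
  defines "P \<equiv> prime_factors n"
  shows "(\<Sum>c<n. real (coprime_count n c) ^ 2)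
       = real (totient n) * (4 * real n * real (totient n) - 2 * (\<Prod>p\<in>P. 1 - real p) + 2 ^ card P) / 12"
proof -
  define \<mu> where "\<mu> S = (-1 :: real) ^ card S" for S :: "nat set"
  define w where "w S = \<mu> S / real (\<Prod>S)" for S
  note signed_sums = sum_Pow_prime_factors_signed[OF assms(1), folded P_def \<mu>_def, folded w_def]
  (* Every term is a function of S times a function of T, except the gcd term,
     so all the double sums below factor. *)
  have pointwise: "(\<Sum>c<n. \<mu> S * real (c div \<Prod>S) * (\<mu> T * real (c div \<Prod>T)))
      = real n / 12 * (4 * real n ^ 2 * (w S * w T) - 3 * real n * (\<mu> S * w T) - 3 * real n * (w S * \<mu> T)
          - \<mu> S * real (\<Prod>S) * w T - w S * (\<mu> T * real (\<Prod>T)) + 3 * (\<mu> S * \<mu> T)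
          + w S * w T * real (gcd (\<Prod>S) (\<Prod>T)) ^ 2)"
    if "S \<in> Pow P" "T \<in> Pow P" for S T
  proof -
    have "\<Prod>S dvd n" "\<Prod>T dvd n" "\<Prod>S > 0" "\<Prod>T > 0"
      using that prod_subset_prime_factors unfolding P_def by auto
    then show ?thesis
      unfolding w_def
      by (simp add: sum_distrib_left[symmetric] mult_ac sum_div_times_div field_simps power2_eq_square
               del: of_nat_prod)
  qed
  have "(\<Sum>c<n. real (coprime_count n c) ^ 2)
      = (\<Sum>S\<in>Pow P. \<Sum>T\<in>Pow P. \<Sum>c<n. \<mu> S * real (c div \<Prod>S) * (\<mu> T * real (c div \<Prod>T)))"
    using assms(1) unfolding P_def \<mu>_def
    by (simp add: coprime_count_eq_sum_Pow power2_eq_square sum_product sum.swap[of _ "{..<n}"])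
  also have "\<dots> = (\<Sum>S\<in>Pow P. \<Sum>T\<in>Pow P. real n / 12 * (4 * real n ^ 2 * (w S * w T)
          - 3 * real n * (\<mu> S * w T) - 3 * real n * (w S * \<mu> T)
          - \<mu> S * real (\<Prod>S) * w T - w S * (\<mu> T * real (\<Prod>T)) + 3 * (\<mu> S * \<mu> T)
          + w S * w T * real (gcd (\<Prod>S) (\<Prod>T)) ^ 2))"
    using pointwise by (intro sum.cong refl)
  also have "\<dots> = real n / 12 * (4 * real n ^ 2 * (\<Sum>S\<in>Pow P. \<Sum>T\<in>Pow P. w S * w T)
          - 3 * real n * (\<Sum>S\<in>Pow P. \<Sum>T\<in>Pow P. \<mu> S * w T)
          - 3 * real n * (\<Sum>S\<in>Pow P. \<Sum>T\<in>Pow P. w S * \<mu> T)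
          - (\<Sum>S\<in>Pow P. \<Sum>T\<in>Pow P. \<mu> S * real (\<Prod>S) * w T)
          - (\<Sum>S\<in>Pow P. \<Sum>T\<in>Pow P. w S * (\<mu> T * real (\<Prod>T)))
          + 3 * (\<Sum>S\<in>Pow P. \<Sum>T\<in>Pow P. \<mu> S * \<mu> T)
          + (\<Sum>S\<in>Pow P. \<Sum>T\<in>Pow P. w S * w T * real (gcd (\<Prod>S) (\<Prod>T)) ^ 2))"
    by (simp add: sum.distrib sum_subtractf sum_distrib_left right_diff_distrib distrib_left mult.assoc)
  also have "\<dots> = real (totient n) * (4 * real n * real (totient n) - 2 * (\<Prod>p\<in>P. 1 - real p) + 2 ^ card P) / 12"
    unfolding sum_product[symmetric] signed_sums
    using assms(1) by (simp add: field_simps power2_eq_square)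
  finally show ?thesis .
qed

lemma coprime_count_self: "coprime_count n n = totient n"
proof -
  have "{1..n} = {0<..n}"
    by auto
  then show ?thesis
    unfolding coprime_count_def totient_def totatives_def by simp
qed

lemma coprime_count_Suc:
  "coprime_count n (Suc c) = coprime_count n c + (if coprime (Suc c) n then 1 else 0)"
proof -
  have "{b \<in> {1..Suc c}. coprime b n}
      = (if coprime (Suc c) n then insert (Suc c) else id) {b \<in> {1..c}. coprime b n}"
    by (auto simp: le_Suc_eq)
  then show ?thesis
    unfolding coprime_count_def by simp
qed

lemma sum_Suc_times_diff:
  fixes f :: "nat \<Rightarrow> 'a::comm_ring_1"
  shows "(\<Sum>c<N. of_nat (Suc c) * (f (Suc c) - f c)) = of_nat N * f N - (\<Sum>c<N. f c)"
  by (induction N) (simp_all add: algebra_simps)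

lemma sum_totatives_coprime_count_times:
  fixes n :: nat
  defines "F \<equiv> \<lambda>c. real (coprime_count n c) ^ 2 + real (coprime_count n c)"
  shows "(\<Sum>b\<in>totatives n. real (coprime_count n b * b)) = (real n * F n - (\<Sum>c<n. F c)) / 2"
proof -
  have "totatives n = Suc ` {c \<in> {..<n}. coprime (Suc c) n}"
    unfolding totatives_def by (auto simp: image_iff gr0_conv_Suc Suc_le_eq)
  then have "(\<Sum>b\<in>totatives n. real (coprime_count n b * b))
      = (\<Sum>c\<in>{c \<in> {..<n}. coprime (Suc c) n}. real (coprime_count n (Suc c) * Suc c))"
    by (simp add: sum.reindex distrib_left)
  also have "\<dots> = (\<Sum>c<n. if coprime (Suc c) n then real (coprime_count n (Suc c) * Suc c) else 0)"
    by (intro sum.inter_filter) simp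
  also have "\<dots> = (\<Sum>c<n. of_nat (Suc c) * (F (Suc c) - F c)) / 2"
    unfolding sum_divide_distrib F_def coprime_count_Suc
    by (intro sum.cong refl) (simp add: algebra_simps power2_eq_square)
  finally show ?thesis
    unfolding sum_Suc_times_diff .
qed

lemma card_le_nth_sorted_wrt_less:
  fixes xs :: "'a::linorder list"
  assumes "sorted_wrt (<) xs" "i < length xs"
  shows "card {x \<in> set xs. x \<le> xs ! i} = Suc i"
proof -
  have "distinct xs"
    using assms(1) strict_sorted_iff by blast
  have "xs ! k \<le> xs ! i \<longleftrightarrow> k \<le> i" if "k < length xs" for k
    using sorted_nth_mono[OF strict_sorted_imp_sorted[OF assms(1)] _ assms(2), of k]
      sorted_wrt_nth_less[OF assms(1) _ that, of i] by (metis not_le)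
  then have "{k. k < length xs \<and> xs ! k \<le> xs ! i} = {..i}"
    using assms(2) by force
  moreover have "{x \<in> set xs. x \<le> xs ! i} = (!) xs ` {k. k < length xs \<and> xs ! k \<le> xs ! i}"
    by (auto simp: in_set_conv_nth)
  ultimately have "{x \<in> set xs. x \<le> xs ! i} = (!) xs ` {..i}"
    by simp
  moreover have "inj_on ((!) xs) {..i}"
    using \<open>distinct xs\<close> assms(2) by (intro inj_on_nth) auto
  ultimately show ?thesis
    by (simp add: card_image)
qed

lemma sum_index_times_totatives_sorted:
  assumes "n > 1"
  shows "(\<Sum>j=1..totient n. j * totatives_sorted n ! (j - 1)) = (\<Sum>b\<in>totatives n. coprime_count n b * b)"
proof -
  define xs where "xs = totatives_sorted n"
  have "{a. 0 < a \<and> a < n \<and> coprime a n} = totatives n"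
    using assms by (auto simp: totatives_def order.order_iff_strict)
  then have set_xs: "set xs = totatives n" and sorted: "sorted_wrt (<) xs"
    unfolding xs_def totatives_sorted_def by (simp_all add: strict_sorted_list_of_set)
  then have "distinct xs" "length xs = totient n"
    using strict_sorted_iff distinct_card unfolding totient_def by metis+
  have "coprime_count n (xs ! i) = Suc i" if "i < length xs" for i
  proof -
    have "xs ! i \<in> totatives n"
      using that set_xs nth_mem by blast
    then have "{b \<in> {1..xs ! i}. coprime b n} = {x \<in> set xs. x \<le> xs ! i}"
      unfolding set_xs by (auto simp: totatives_def)
    then show ?thesis
      unfolding coprime_count_def using card_le_nth_sorted_wrt_less[OF sorted that] by simp
  qed
  then have "(\<Sum>j=1..totient n. j * xs ! (j - 1)) = (\<Sum>i<length xs. coprime_count n (xs ! i) * xs ! i)"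
    unfolding \<open>length xs = totient n\<close> by (simp add: sum.atLeast1_atMost_eq)
  also have "\<dots> = (\<Sum>b\<in>totatives n. coprime_count n b * b)"
    using sum.reindex_bij_betw[OF bij_betw_nth[OF \<open>distinct xs\<close> refl set_xs[symmetric]]] by simp
  finally show ?thesis
    unfolding xs_def .
qed

theorem theorem1:
  fixes n :: nat
  assumes "n > 1"
  defines "m \<equiv> radical n"
  defines "a \<equiv> (\<lambda>j. totatives_sorted n ! (j - 1))"
  shows "real (\<Sum>j=1..totient n. j * a j) =
    real (totient n) / 24 *
      (8 * real n * real (totient n) + 6 * real n
       + 2 * real (totient m) * (-1) ^ omega m - 2 ^ omega m)"
proof -
  define L where "L c = real (coprime_count n c)" for c
  have "real (\<Sum>j=1..totient n. j * a j) = (\<Sum>b\<in>totatives n. real (coprime_count n b * b))"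
    unfolding a_def sum_index_times_totatives_sorted[OF assms(1)] by simp
  also have "\<dots> = (real n * (L n ^ 2 + L n) - ((\<Sum>c<n. L c ^ 2) + (\<Sum>c<n. L c))) / 2"
    unfolding sum_totatives_coprime_count_times L_def by (simp add: sum.distrib)
  also have "\<dots> = real (totient n) / 24 *
      (8 * real n * real (totient n) + 6 * real n
       + 2 * (\<Prod>p\<in>prime_factors n. 1 - real p) - 2 ^ card (prime_factors n))"
    unfolding L_def coprime_count_self sum_coprime_count[OF assms(1)] sum_coprime_count_squared[OF assms(1)]
    by (simp add: field_simps power2_eq_square)
  finally show ?thesis
    unfolding m_def mult.assoc totient_radical_signed[symmetric]
    by (simp add: omega_def prime_factors_radical)
qed

end
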